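(* Let $I\subset\mathbb R$ be an interval. (i) Let $f:I\to\mathbb R$ be $\mathcal G$-convex, $g\in\mathcal G$, and $t_1<t_2$ in $I$ with $g(t_i)=f(t_i)$ for $i=1,2$. Then $g(t)\ge f(t)$ for all $t\in[t_1,t_2]$ and $g(t)\le f(t)$ for all $t\in I\setminus[t_1,t_2]$. (ii) Let $f:I\to\mathbb R$ be such that for all $t_1<t_2$ in $I$ there is $g\in\mathcal G$ with $g(t_i)=f(t_i)$, $i=1,2$, and $g(t)\ge f(t)$ for all $t\in[t_1,t_2]$. Then the right derivative of $f$ exists on $I\setminus\{\sup I\}$ and the left derivative on $I\setminus\{\inf I\}$; moreover, for every $t_0\in I$ and every $v_0\in\partial^{\pm}f(t_0)$, the function $$s\mapsto\sqrt{f(t_0)^2+2(s-t_0)f(t_0)v_0+(s-t_0)^2}$$ belongs to $\mathcal G$ and is a $\mathcal G$-tangent of $f$ at $t_0$. In particular, $f$ is $\mathcal G$-convex.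
   Context: $\mathcal G:=\{t\mapsto\sqrt{(t-t_0)^2+h^2}:\ t_0\in\mathbb R,\ h\ge0\}$. A function $f:I\to\mathbb R$ is $\mathcal G$-convex if for every $t_0\in I$ there is $g\in\mathcal G$ (called a $\mathcal G$-tangent of $f$ at $t_0$) with $g(t_0)=f(t_0)$ and $g(s)\le f(s)$ for all $s\in I$. With $f^{\oplus}$, $f^{\ominus}$ the right and left derivatives: for $t$ in the interior of $I$, $\partial^{\pm}f(t):=[\min(f^{\ominus}(t),f^{\oplus}(t)),\max(f^{\ominus}(t),f^{\oplus}(t))]$; if $\inf I\in I$ then $\partial^{\pm}f(\inf I):=\{f^{\oplus}(\inf I)\}$; if $\sup I\in I$ then $\partial^{\pm}f(\sup I):=\{f^{\ominus}(\sup I)\}$. *)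

theory Defs
  imports "HOL-Analysis.Analysis"
begin

definition Gfun :: "real \<Rightarrow> real \<Rightarrow> real \<Rightarrow> real" where
  "Gfun t0 h = (\<lambda>t. sqrt ((t - t0)^2 + h^2))"

definition Gclass :: "(real \<Rightarrow> real) set" where
  "Gclass = {Gfun t0 h | t0 h. h \<ge> 0}"

definition G_tangent :: "real set \<Rightarrow> (real \<Rightarrow> real) \<Rightarrow> real \<Rightarrow> (real \<Rightarrow> real) \<Rightarrow> bool" where
  "G_tangent I f t0 g \<longleftrightarrow> g \<in> Gclass \<and> g t0 = f t0 \<and> (\<forall>s\<in>I. g s \<le> f s)"

definition G_convex :: "real set \<Rightarrow> (real \<Rightarrow> real) \<Rightarrow> bool" where
  "G_convex I f \<longleftrightarrow> (\<forall>t0\<in>I. \<exists>g. G_tangent I f t0 g)"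

definition has_rderiv :: "(real \<Rightarrow> real) \<Rightarrow> real set \<Rightarrow> real \<Rightarrow> real \<Rightarrow> bool" where
  "has_rderiv f I t v \<longleftrightarrow> (f has_real_derivative v) (at t within (I \<inter> {t<..}))"

definition has_lderiv :: "(real \<Rightarrow> real) \<Rightarrow> real set \<Rightarrow> real \<Rightarrow> real \<Rightarrow> bool" where
  "has_lderiv f I t v \<longleftrightarrow> (f has_real_derivative v) (at t within (I \<inter> {..<t}))"

definition rderiv :: "(real \<Rightarrow> real) \<Rightarrow> real set \<Rightarrow> real \<Rightarrow> real" where
  "rderiv f I t = (THE v. has_rderiv f I t v)"

definition lderiv :: "(real \<Rightarrow> real) \<Rightarrow> real set \<Rightarrow> real \<Rightarrow> real" where
  "lderiv f I t = (THE v. has_lderiv f I t v)"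

text \<open>The set partial-plus-minus f(t). "t = inf I \<in> I" is expressed as: t \<in> I is a lower bound of I;
  similarly for sup.\<close>
definition pm_subdiff :: "(real \<Rightarrow> real) \<Rightarrow> real set \<Rightarrow> real \<Rightarrow> real set" where
  "pm_subdiff f I t =
     (if (\<forall>s\<in>I. t \<le> s) then {rderiv f I t}
      else if (\<forall>s\<in>I. s \<le> t) then {lderiv f I t}
      else {min (lderiv f I t) (rderiv f I t) .. max (lderiv f I t) (rderiv f I t)})"

end

theory Submission
  imports Defs
begin

(* For g in G the function g(t)^2 - t^2 is affine. Hence G-convexity of f, and equally the chord
   hypothesis of (ii), says that phi(t) = f(t)^2 - t^2 is convex on I (with f >= 0). Part (i) is
   then the sign pattern of the convex function f^2 - g^2 around its two zeros t1 < t2.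
   In (ii) every chord of f is a G-function, so f is 1-Lipschitz, and f(t0) = 0 forces
   f(t) = |t - t0|; otherwise f = sqrt(phi(t) + t^2) inherits one-sided derivatives from the convex
   function phi. For v0 between them, m = 2 f(t0) v0 - 2 t0 is a subgradient of phi at t0, and the
   radicand of the proposed tangent is f(s)^2 - (phi(s) - phi(t0) - m (s - t0)) <= f(s)^2. *)

lemma Gfun_nonneg: "0 \<le> Gfun a h t"
  by (simp add: Gfun_def)

lemma Gfun_power2: "(Gfun a h t)\<^sup>2 = (t - a)\<^sup>2 + h\<^sup>2"
  by (simp add: Gfun_def)

lemma Gfun_power2_minus_power2: "(Gfun a h t)\<^sup>2 - t\<^sup>2 = a\<^sup>2 + h\<^sup>2 - 2 * a * t"
  unfolding Gfun_power2 by (simp add: power2_eq_square algebra_simps)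

lemma Gfun_dist_le: "\<bar>Gfun a h s - Gfun a h t\<bar> \<le> \<bar>s - t\<bar>"
proof -
  have "\<bar>norm (Complex (s - a) h) - norm (Complex (t - a) h)\<bar> \<le> norm (Complex (s - a) h - Complex (t - a) h)"
    by (rule norm_triangle_ineq3)
  also have "Complex (s - a) h - Complex (t - a) h = Complex (s - t) 0"
    by (simp add: complex_eq_iff)
  finally show ?thesis
    by (simp add: Gfun_def complex_norm)
qed

lemma Gfun_eq_0_iff: "Gfun a h t = 0 \<longleftrightarrow> a = t \<and> h = 0"
  by (auto simp: Gfun_def sum_power2_eq_zero_iff)

lemma point_slope_eq_Gfun:
  fixes y v t0 :: real
  assumes "0 \<le> y" "\<bar>v\<bar> \<le> 1"
  shows "(\<lambda>s. sqrt (y\<^sup>2 + 2 * (s - t0) * y * v + (s - t0)\<^sup>2)) = Gfun (t0 - y * v) (y * sqrt (1 - v\<^sup>2))"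
proof
  fix s
  have "0 \<le> 1 - v\<^sup>2"
    using assms(2) abs_square_le_1 by auto
  then have "(s - (t0 - y * v))\<^sup>2 + (y * sqrt (1 - v\<^sup>2))\<^sup>2 = y\<^sup>2 + 2 * (s - t0) * y * v + (s - t0)\<^sup>2"
    by (simp add: power_mult_distrib power2_eq_square algebra_simps)
  then show "sqrt (y\<^sup>2 + 2 * (s - t0) * y * v + (s - t0)\<^sup>2) = Gfun (t0 - y * v) (y * sqrt (1 - v\<^sup>2)) s"
    by (simp add: Gfun_def)
qed

lemma point_slope_in_Gclass:
  fixes y v t0 :: real
  assumes "0 \<le> y" "\<bar>v\<bar> \<le> 1"
  shows "(\<lambda>s. sqrt (y\<^sup>2 + 2 * (s - t0) * y * v + (s - t0)\<^sup>2)) \<in> Gclass"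
proof -
  have "0 \<le> y * sqrt (1 - v\<^sup>2)"
    using assms by (simp add: abs_square_le_1)
  then show ?thesis
    unfolding point_slope_eq_Gfun[OF assms] Gclass_def by blast
qed

lemma convex_on_affine:
  fixes \<alpha> \<beta> :: real
  assumes "convex I"
  shows "convex_on I (\<lambda>t. \<alpha> * t + \<beta>)"
  using assms unfolding convex_on_def
  by (auto simp: algebra_simps simp flip: distrib_right)

lemma convex_on_supporting_linesI:
  fixes \<phi> :: "real \<Rightarrow> real"
  assumes "convex C" and "\<And>x. x \<in> C \<Longrightarrow> \<exists>m. \<forall>y\<in>C. \<phi> x + m * (y - x) \<le> \<phi> y"
  shows "convex_on C \<phi>"
proof -
  define m where "m x = (SOME m. \<forall>y\<in>C. \<phi> x + m * (y - x) \<le> \<phi> y)" for x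
  have "m x * (y - x) \<le> \<phi> y - \<phi> x" if "x \<in> C" "y \<in> C" for x y
    using someI_ex[OF assms(2)[OF that(1)]] that unfolding m_def by force
  then show ?thesis
    by (rule pos_convex_function[OF assms(1)])
qed

lemma divided_difference_commute: "(\<phi> x - \<phi> y) / (x - y) = (\<phi> y - \<phi> x) / (y - (x::real))"
  by (metis minus_diff_eq minus_divide_divide)

lemma convex_on_nonpos_between_zeros:
  fixes \<psi> :: "real \<Rightarrow> real"
  assumes \<psi>: "convex_on I \<psi>" and "t1 \<in> I" "t2 \<in> I" "\<psi> t1 = 0" "\<psi> t2 = 0" "t1 \<le> t" "t \<le> t2"
  shows "\<psi> t \<le> 0"
proof (cases "t = t1 \<or> t = t2")
  case False
  then have "t1 < t" "t < t2"
    using assms by auto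
  then show ?thesis
    using convex_on_slope_le(1)[OF \<psi> \<open>t1 \<in> I\<close> \<open>t2 \<in> I\<close>] assms
    by (simp add: zero_le_divide_iff)
qed (use assms in auto)

lemma convex_on_nonneg_outside_zeros:
  fixes \<psi> :: "real \<Rightarrow> real"
  assumes \<psi>: "convex_on I \<psi>" and "t1 \<in> I" "t2 \<in> I" "t1 < t2" "\<psi> t1 = 0" "\<psi> t2 = 0"
    and "t \<in> I" "t \<notin> {t1..t2}"
  shows "0 \<le> \<psi> t"
proof -
  have "\<psi> t * (t - t2) \<le> \<psi> t * (t - t1)"
  proof (cases "t < t1")
    case True
    then show ?thesis
      using convex_on_slope_le(1)[OF \<psi> \<open>t \<in> I\<close> \<open>t2 \<in> I\<close> True \<open>t1 < t2\<close>] assms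
      by (simp add: divide_simps mult_neg_neg)
  next
    case False
    then have "t2 < t"
      using assms by auto
    then show ?thesis
      using convex_on_slope_le(2)[OF \<psi> \<open>t1 \<in> I\<close> \<open>t \<in> I\<close> \<open>t1 < t2\<close>] assms
      by (simp add: divide_simps) (simp add: algebra_simps)
  qed
  then have "0 \<le> \<psi> t * (t2 - t1)"
    by (simp add: algebra_simps)
  then show ?thesis
    using \<open>t1 < t2\<close> by (simp add: zero_le_mult_iff)
qed

lemma convex_on_has_right_derivative:
  fixes \<phi> :: "real \<Rightarrow> real"
  assumes \<phi>: "convex_on I \<phi>" and "t0 \<in> I"
    and bdd: "bdd_below ((\<lambda>s. (\<phi> s - \<phi> t0) / (s - t0)) ` (I \<inter> {t0<..}))"
  shows "(\<phi> has_real_derivative (INF s\<in>I \<inter> {t0<..}. (\<phi> s - \<phi> t0) / (s - t0)))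
           (at t0 within I \<inter> {t0<..})"
proof -
  obtain K where K: "\<And>s. s \<in> I \<Longrightarrow> t0 < s \<Longrightarrow> K \<le> (\<phi> s - \<phi> t0) / (s - t0)"
    using bdd by (auto simp: bdd_below_def)
  have "((\<lambda>s. (\<phi> s - \<phi> t0) / (s - t0)) \<longlongrightarrow>
          Inf ((\<lambda>s. (\<phi> s - \<phi> t0) / (s - t0)) ` ({t0<..} \<inter> I))) (at t0 within {t0<..} \<inter> I)"
  proof (rule Lim_right_bound)
    fix a b assume "a \<in> I" "b \<in> I" "t0 < a" "a \<le> b"
    then show "(\<phi> a - \<phi> t0) / (a - t0) \<le> (\<phi> b - \<phi> t0) / (b - t0)"
      using convex_on_slope_le(1)[OF \<phi> \<open>t0 \<in> I\<close> \<open>b \<in> I\<close>, of a]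
      by (cases "a = b") (auto simp: divided_difference_commute[of \<phi> t0])
  qed (rule K)
  then show ?thesis
    unfolding has_field_derivative_iff by (simp add: Int_commute)
qed

lemma convex_on_has_left_derivative:
  fixes \<phi> :: "real \<Rightarrow> real"
  assumes \<phi>: "convex_on I \<phi>" and "t0 \<in> I"
    and bdd: "bdd_above ((\<lambda>s. (\<phi> s - \<phi> t0) / (s - t0)) ` (I \<inter> {..<t0}))"
  shows "(\<phi> has_real_derivative (SUP s\<in>I \<inter> {..<t0}. (\<phi> s - \<phi> t0) / (s - t0)))
           (at t0 within I \<inter> {..<t0})"
proof -
  obtain K where K: "\<And>s. s \<in> I \<Longrightarrow> s < t0 \<Longrightarrow> (\<phi> s - \<phi> t0) / (s - t0) \<le> K"
    using bdd by (auto simp: bdd_above_def)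
  have "((\<lambda>s. (\<phi> s - \<phi> t0) / (s - t0)) \<longlongrightarrow>
          Sup ((\<lambda>s. (\<phi> s - \<phi> t0) / (s - t0)) ` ({..<t0} \<inter> I))) (at t0 within {..<t0} \<inter> I)"
  proof (rule Lim_left_bound)
    fix a b assume "a \<in> I" "b \<in> I" "b < t0" "a \<le> b"
    then show "(\<phi> a - \<phi> t0) / (a - t0) \<le> (\<phi> b - \<phi> t0) / (b - t0)"
      using convex_on_slope_le(2)[OF \<phi> \<open>a \<in> I\<close> \<open>t0 \<in> I\<close>, of b]
      by (cases "a = b") auto
  qed (rule K)
  then show ?thesis
    unfolding has_field_derivative_iff by (simp add: Int_commute)
qed

lemma convex_on_left_SUP_le_right_INF:
  fixes \<phi> :: "real \<Rightarrow> real"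
  assumes \<phi>: "convex_on I \<phi>" and "t0 \<in> I" "a \<in> I" "a < t0" "b \<in> I" "t0 < b"
  shows "(SUP s\<in>I \<inter> {..<t0}. (\<phi> s - \<phi> t0) / (s - t0)) \<le> (INF s\<in>I \<inter> {t0<..}. (\<phi> s - \<phi> t0) / (s - t0))"
proof (rule cSUP_least)
  fix s assume s: "s \<in> I \<inter> {..<t0}"
  show "(\<phi> s - \<phi> t0) / (s - t0) \<le> (INF u\<in>I \<inter> {t0<..}. (\<phi> u - \<phi> t0) / (u - t0))"
  proof (rule cINF_greatest)
    fix u assume u: "u \<in> I \<inter> {t0<..}"
    have "(\<phi> s - \<phi> t0) / (s - t0) \<le> (\<phi> s - \<phi> u) / (s - u)"
      using convex_on_slope_le(1)[OF \<phi>, of s u t0] s u by auto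
    also have "\<dots> \<le> (\<phi> t0 - \<phi> u) / (t0 - u)"
      using convex_on_slope_le(2)[OF \<phi>, of s u t0] s u by auto
    finally show "(\<phi> s - \<phi> t0) / (s - t0) \<le> (\<phi> u - \<phi> t0) / (u - t0)"
      by (simp add: divided_difference_commute[of \<phi> t0])
  qed (use assms in auto)
qed (use assms in auto)

lemma has_real_derivative_of_square:
  fixes f :: "real \<Rightarrow> real"
  assumes D: "((\<lambda>s. (f s)\<^sup>2) has_real_derivative D) (at x within S)"
    and nonneg: "\<And>s. s \<in> S \<Longrightarrow> 0 \<le> f s" and pos: "0 < f x"
  shows "(f has_real_derivative D / (2 * f x)) (at x within S)"
proof -
  have "((\<lambda>s. sqrt ((f s)\<^sup>2)) has_real_derivative inverse (sqrt ((f x)\<^sup>2)) / 2 * D) (at x within S)"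
    using pos by (intro DERIV_chain'[OF D] DERIV_real_sqrt) simp
  moreover have "\<forall>\<^sub>F s in at x within S. sqrt ((f s)\<^sup>2) = f s"
    using nonneg by (auto simp: eventually_at_filter)
  ultimately show ?thesis
    using pos has_field_derivative_cong_eventually[of "\<lambda>s. sqrt ((f s)\<^sup>2)" f]
    by (simp add: field_simps)
qed

lemma has_real_derivative_abs_le_Lipschitz:
  fixes f :: "real \<Rightarrow> real"
  assumes "(f has_real_derivative D) (at x within S)" "at x within S \<noteq> bot"
    and "\<And>s. s \<in> S \<Longrightarrow> \<bar>f s - f x\<bar> \<le> B * \<bar>s - x\<bar>"
  shows "\<bar>D\<bar> \<le> B"
proof (rule tendsto_upperbound)
  show "((\<lambda>s. \<bar>(f s - f x) / (s - x)\<bar>) \<longlongrightarrow> \<bar>D\<bar>) (at x within S)"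
    using assms(1) unfolding has_field_derivative_iff by (rule tendsto_rabs)
  show "\<forall>\<^sub>F s in at x within S. \<bar>(f s - f x) / (s - x)\<bar> \<le> B"
    using assms(3) by (auto simp: eventually_at_filter abs_divide divide_le_eq)
qed (rule assms(2))

lemma at_within_interval_right_neq_bot:
  fixes I :: "real set"
  assumes "is_interval I" "t0 \<in> I" "b \<in> I" "t0 < b"
  shows "at t0 within I \<inter> {t0<..} \<noteq> bot"
proof -
  have "{t0<..<b} \<subseteq> I \<inter> {t0<..}"
    using assms is_interval_1[THEN iffD1, OF assms(1), rule_format, of t0 b] by auto
  then show ?thesis
    using islimpt_subset[OF islimpt_greaterThanLessThan1[OF \<open>t0 < b\<close>]] trivial_limit_within
    by blast
qed

lemma at_within_interval_left_neq_bot: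
  fixes I :: "real set"
  assumes "is_interval I" "t0 \<in> I" "a \<in> I" "a < t0"
  shows "at t0 within I \<inter> {..<t0} \<noteq> bot"
proof -
  have "{a<..<t0} \<subseteq> I \<inter> {..<t0}"
    using assms is_interval_1[THEN iffD1, OF assms(1), rule_format, of a t0] by auto
  then show ?thesis
    using islimpt_subset[OF islimpt_greaterThanLessThan2[OF \<open>a < t0\<close>]] trivial_limit_within
    by blast
qed

lemma rderiv_eqI:
  assumes "is_interval I" "t0 \<in> I" "b \<in> I" "t0 < b" "has_rderiv f I t0 v"
  shows "rderiv f I t0 = v"
  using assms has_field_derivative_unique[OF _ _ at_within_interval_right_neq_bot[OF assms(1-4)]]
  unfolding rderiv_def has_rderiv_def by blast

lemma lderiv_eqI:
  assumes "is_interval I" "t0 \<in> I" "a \<in> I" "a < t0" "has_lderiv f I t0 v"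
  shows "lderiv f I t0 = v"
  using assms has_field_derivative_unique[OF _ _ at_within_interval_left_neq_bot[OF assms(1-4)]]
  unfolding lderiv_def has_lderiv_def by blast

lemma G_convex_nonneg:
  assumes "G_convex I f" "t \<in> I"
  shows "0 \<le> f t"
proof -
  obtain g where "g \<in> Gclass" "g t = f t"
    using assms unfolding G_convex_def G_tangent_def by blast
  moreover from this(1) obtain a h where "g = Gfun a h"
    unfolding Gclass_def by blast
  ultimately show ?thesis
    using Gfun_nonneg[of a h t] by simp
qed

lemma G_convex_imp_convex_on:
  fixes I :: "real set"
  assumes "convex I" "G_convex I f"
  shows "convex_on I (\<lambda>t. (f t)\<^sup>2 - t\<^sup>2)"
proof (rule convex_on_supporting_linesI[OF assms(1)])
  fix x assume "x \<in> I"
  then obtain a h where tangent: "Gfun a h x = f x" "\<And>s. s \<in> I \<Longrightarrow> Gfun a h s \<le> f s"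
    using assms(2) unfolding G_convex_def G_tangent_def Gclass_def by blast
  have "(f x)\<^sup>2 - x\<^sup>2 + (- 2 * a) * (s - x) \<le> (f s)\<^sup>2 - s\<^sup>2" if "s \<in> I" for s
  proof -
    have "(Gfun a h s)\<^sup>2 \<le> (f s)\<^sup>2"
      using tangent(2)[OF that] Gfun_nonneg by (rule power_mono)
    then show ?thesis
      using Gfun_power2_minus_power2[of a h s] Gfun_power2_minus_power2[of a h x] tangent(1)
      by (simp add: algebra_simps)
  qed
  then show "\<exists>m. \<forall>s\<in>I. (f x)\<^sup>2 - x\<^sup>2 + m * (s - x) \<le> (f s)\<^sup>2 - s\<^sup>2"
    by blast
qed

lemma G_convex_two_point_contact:
  fixes I :: "real set"
  assumes I: "is_interval I" and f: "G_convex I f" and g: "g \<in> Gclass"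
    and t12: "t1 \<in> I" "t2 \<in> I" "t1 < t2" "g t1 = f t1" "g t2 = f t2"
  shows "(\<forall>t\<in>{t1..t2}. f t \<le> g t) \<and> (\<forall>t\<in>I - {t1..t2}. g t \<le> f t)"
proof -
  obtain a h where g_eq: "g = Gfun a h"
    using g unfolding Gclass_def by blast
  define \<psi> where "\<psi> t = (f t)\<^sup>2 - (g t)\<^sup>2" for t
  have "\<psi> = (\<lambda>t. ((f t)\<^sup>2 - t\<^sup>2) + (2 * a * t + - (a\<^sup>2 + h\<^sup>2)))"
    using Gfun_power2_minus_power2[of a h] by (auto simp: \<psi>_def g_eq fun_eq_iff algebra_simps)
  moreover have "convex I"
    using I by (simp add: is_interval_convex_1)
  ultimately have \<psi>: "convex_on I \<psi>"
    by (simp only:) (intro convex_on_add G_convex_imp_convex_on f convex_on_affine)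
  have zeros: "\<psi> t1 = 0" "\<psi> t2 = 0"
    using t12 by (simp_all add: \<psi>_def)
  have nonneg: "0 \<le> f t" "0 \<le> g t" if "t \<in> I" for t
    using G_convex_nonneg[OF f that] Gfun_nonneg by (simp_all add: g_eq)
  have "f t \<le> g t" if "t \<in> {t1..t2}" for t
  proof -
    have "t \<in> I"
      using is_interval_1[THEN iffD1, OF I, rule_format, of t1 t2 t] t12 that by simp
    then show ?thesis
      using convex_on_nonpos_between_zeros[OF \<psi> t12(1,2) zeros] that nonneg
      by (auto simp: \<psi>_def intro: power2_le_imp_le)
  qed
  moreover have "g t \<le> f t" if "t \<in> I - {t1..t2}" for t
    using convex_on_nonneg_outside_zeros[OF \<psi> t12(1-3) zeros] that nonneg
    by (auto simp: \<psi>_def intro: power2_le_imp_le)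
  ultimately show ?thesis
    by blast
qed

locale below_G_chords =
  fixes I :: "real set" and f :: "real \<Rightarrow> real"
  assumes interval: "is_interval I"
    and nontrivial: "\<exists>a\<in>I. \<exists>b\<in>I. a < b"
    and chord: "\<And>t1 t2. t1 \<in> I \<Longrightarrow> t2 \<in> I \<Longrightarrow> t1 < t2 \<Longrightarrow>
      \<exists>g\<in>Gclass. g t1 = f t1 \<and> g t2 = f t2 \<and> (\<forall>t\<in>{t1..t2}. f t \<le> g t)"
begin

lemma between_mem: "x \<in> I \<Longrightarrow> z \<in> I \<Longrightarrow> x \<le> y \<Longrightarrow> y \<le> z \<Longrightarrow> y \<in> I"
  using interval unfolding is_interval_1 by blast

lemma chordE:
  assumes "t1 \<in> I" "t2 \<in> I" "t1 < t2"
  obtains a h where "Gfun a h t1 = f t1" "Gfun a h t2 = f t2"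
    "\<And>t. t1 \<le> t \<Longrightarrow> t \<le> t2 \<Longrightarrow> f t \<le> Gfun a h t"
  using chord[OF assms] unfolding Gclass_def by auto

lemma Gfun_through_two_points:
  assumes "s \<in> I" "t \<in> I" "s \<noteq> t"
  obtains a h where "Gfun a h s = f s" "Gfun a h t = f t"
proof (cases "s < t")
  case True
  then show ?thesis
    using chordE[OF assms(1,2)] that by metis
next
  case False
  then show ?thesis
    using chordE[OF assms(2,1)] that assms(3) by (metis linorder_neqE_linordered_idom)
qed

lemma nonneg: "t \<in> I \<Longrightarrow> 0 \<le> f t"
proof -
  assume t: "t \<in> I"
  obtain u where "u \<in> I" "u \<noteq> t"
    using nontrivial by (metis less_irrefl)
  then obtain a h where "Gfun a h t = f t"
    using Gfun_through_two_points[OF t] by metis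
  then show "0 \<le> f t"
    using Gfun_nonneg by metis
qed

lemma dist_le:
  assumes "s \<in> I" "t \<in> I"
  shows "\<bar>f s - f t\<bar> \<le> \<bar>s - t\<bar>"
proof (cases "s = t")
  case False
  then obtain a h where "Gfun a h s = f s" "Gfun a h t = f t"
    using Gfun_through_two_points[OF assms] by metis
  then show ?thesis
    using Gfun_dist_le[of a h s t] by simp
qed simp

lemma eq_abs_if_zero:
  assumes "t0 \<in> I" "f t0 = 0" "t \<in> I"
  shows "f t = \<bar>t - t0\<bar>"
proof (cases "t = t0")
  case False
  then obtain a h where "Gfun a h t = f t" "Gfun a h t0 = 0"
    using Gfun_through_two_points[OF assms(3,1)] assms(2) by metis
  then show ?thesis
    by (simp add: Gfun_eq_0_iff) (simp add: Gfun_def)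
qed (use assms in simp)

definition \<phi> :: "real \<Rightarrow> real" where
  "\<phi> t = (f t)\<^sup>2 - t\<^sup>2"

lemma convex_on_\<phi>: "convex_on I \<phi>"
proof (rule convex_on_linorderI)
  fix \<mu> x y :: real
  assume \<mu>: "0 < \<mu>" "\<mu> < 1" and xy: "x \<in> I" "y \<in> I" "x < y"
  define p where "p = (1 - \<mu>) * x + \<mu> * y"
  have "\<mu> * x \<le> \<mu> * y" "(1 - \<mu>) * x \<le> (1 - \<mu>) * y"
    using \<mu> xy(3) by (simp_all add: mult_left_mono)
  then have p: "x \<le> p" "p \<le> y"
    unfolding p_def by (simp_all add: algebra_simps)
  obtain a h where g: "Gfun a h x = f x" "Gfun a h y = f y" "f p \<le> Gfun a h p"
    using chordE[OF xy] p by metis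
  have "\<phi> p \<le> (Gfun a h p)\<^sup>2 - p\<^sup>2"
    using power_mono[OF g(3) nonneg[OF between_mem[OF xy(1,2) p]], of 2] by (simp add: \<phi>_def)
  also have "\<dots> = (1 - \<mu>) * ((Gfun a h x)\<^sup>2 - x\<^sup>2) + \<mu> * ((Gfun a h y)\<^sup>2 - y\<^sup>2)"
    unfolding Gfun_power2_minus_power2 p_def by (simp add: algebra_simps)
  finally show "\<phi> ((1 - \<mu>) *\<^sub>R x + \<mu> *\<^sub>R y) \<le> (1 - \<mu>) * \<phi> x + \<mu> * \<phi> y"
    using g by (simp add: \<phi>_def p_def)
qed (use interval in \<open>simp add: is_interval_convex_1\<close>)


lemma \<phi>_slope_bound:
  assumes "s \<in> I" "t0 \<in> I" "s \<noteq> t0"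
  shows "\<bar>(\<phi> s - \<phi> t0) / (s - t0) + (s + t0)\<bar> \<le> f s + f t0"
proof -
  define q where "q = (f s - f t0) / (s - t0)"
  have "(\<phi> s - \<phi> t0) / (s - t0) + (s + t0) = q * (f s + f t0)"
    using assms(3) unfolding q_def by (simp add: \<phi>_def field_simps power2_eq_square)
  moreover have "\<bar>q\<bar> \<le> 1"
    using dist_le[OF assms(1,2)] assms(3) unfolding q_def by (simp add: abs_divide divide_le_eq)
  moreover have "0 \<le> f s + f t0"
    using nonneg assms by simp
  ultimately show ?thesis
    by (simp add: abs_mult mult_left_le_one_le)
qed

lemma \<phi>_right_slopes_bdd_below:
  assumes t0: "t0 \<in> I"
  shows "bdd_below ((\<lambda>s. (\<phi> s - \<phi> t0) / (s - t0)) ` (I \<inter> {t0<..}))"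
proof (cases "\<exists>b\<in>I. t0 < b")
  case True
  then obtain b where b: "b \<in> I" "t0 < b"
    by blast
  define K where "K = min ((\<phi> b - \<phi> t0) / (b - t0)) (- (2 * f t0 + (b - t0)) - (b + t0))"
  have "K \<le> (\<phi> s - \<phi> t0) / (s - t0)" if s: "s \<in> I" "t0 < s" for s
  proof (cases "s \<le> b")
    case True
    have "f s \<le> f t0 + (b - t0)"
      using dist_le[OF s(1) t0] s(2) True by linarith
    then have "K \<le> - (f s + f t0) - (s + t0)"
      using True unfolding K_def by linarith
    also have "\<dots> \<le> (\<phi> s - \<phi> t0) / (s - t0)"
      using \<phi>_slope_bound[OF s(1) t0] s(2) by linarith
    finally show ?thesis .
  next
    case False
    have "K \<le> (\<phi> b - \<phi> t0) / (b - t0)"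
      unfolding K_def by linarith
    also have "\<dots> \<le> (\<phi> s - \<phi> t0) / (s - t0)"
      using convex_on_slope_le(1)[OF convex_on_\<phi> t0 s(1) b(2)] False
      by (simp add: divided_difference_commute[of \<phi> t0])
    finally show ?thesis .
  qed
  then show ?thesis
    by (intro bdd_belowI2[where m = K]) simp
next
  case False
  then have "I \<inter> {t0<..} = {}"
    by auto
  then show ?thesis
    by simp
qed

lemma \<phi>_left_slopes_bdd_above:
  assumes t0: "t0 \<in> I"
  shows "bdd_above ((\<lambda>s. (\<phi> s - \<phi> t0) / (s - t0)) ` (I \<inter> {..<t0}))"
proof (cases "\<exists>a\<in>I. a < t0")
  case True
  then obtain a where a: "a \<in> I" "a < t0"
    by blast
  define K where "K = max ((\<phi> a - \<phi> t0) / (a - t0)) (2 * f t0 + (t0 - a) - (a + t0))"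
  have "(\<phi> s - \<phi> t0) / (s - t0) \<le> K" if s: "s \<in> I" "s < t0" for s
  proof (cases "a \<le> s")
    case True
    have "f s \<le> f t0 + (t0 - a)"
      using dist_le[OF s(1) t0] s(2) True by linarith
    have "(\<phi> s - \<phi> t0) / (s - t0) \<le> (f s + f t0) - (s + t0)"
      using \<phi>_slope_bound[OF s(1) t0] s(2) by linarith
    also have "\<dots> \<le> K"
      using True \<open>f s \<le> f t0 + (t0 - a)\<close> unfolding K_def by linarith
    finally show ?thesis .
  next
    case False
    have "(\<phi> s - \<phi> t0) / (s - t0) \<le> (\<phi> a - \<phi> t0) / (a - t0)"
      using convex_on_slope_le(2)[OF convex_on_\<phi> s(1) t0, of a] False a(2) by simp
    also have "\<dots> \<le> K"
      unfolding K_def by linarith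
    finally show ?thesis .
  qed
  then show ?thesis
    by (intro bdd_aboveI2[where M = K]) simp
next
  case False
  then have "I \<inter> {..<t0} = {}"
    by auto
  then show ?thesis
    by simp
qed

definition \<phi>_rderiv :: "real \<Rightarrow> real" where
  "\<phi>_rderiv t0 = (INF s\<in>I \<inter> {t0<..}. (\<phi> s - \<phi> t0) / (s - t0))"

definition \<phi>_lderiv :: "real \<Rightarrow> real" where
  "\<phi>_lderiv t0 = (SUP s\<in>I \<inter> {..<t0}. (\<phi> s - \<phi> t0) / (s - t0))"

lemma \<phi>_has_right_derivative:
  "t0 \<in> I \<Longrightarrow> (\<phi> has_real_derivative \<phi>_rderiv t0) (at t0 within I \<inter> {t0<..})"
  unfolding \<phi>_rderiv_def
  by (rule convex_on_has_right_derivative[OF convex_on_\<phi> _ \<phi>_right_slopes_bdd_below])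

lemma \<phi>_has_left_derivative:
  "t0 \<in> I \<Longrightarrow> (\<phi> has_real_derivative \<phi>_lderiv t0) (at t0 within I \<inter> {..<t0})"
  unfolding \<phi>_lderiv_def
  by (rule convex_on_has_left_derivative[OF convex_on_\<phi> _ \<phi>_left_slopes_bdd_above])

lemma \<phi>_rderiv_le_slope:
  "t0 \<in> I \<Longrightarrow> s \<in> I \<Longrightarrow> t0 < s \<Longrightarrow> \<phi>_rderiv t0 \<le> (\<phi> s - \<phi> t0) / (s - t0)"
  unfolding \<phi>_rderiv_def by (rule cINF_lower[OF \<phi>_right_slopes_bdd_below]) auto

lemma slope_le_\<phi>_lderiv:
  "t0 \<in> I \<Longrightarrow> s \<in> I \<Longrightarrow> s < t0 \<Longrightarrow> (\<phi> s - \<phi> t0) / (s - t0) \<le> \<phi>_lderiv t0"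
  unfolding \<phi>_lderiv_def by (rule cSUP_upper[OF _ \<phi>_left_slopes_bdd_above]) auto

lemma \<phi>_lderiv_le_rderiv:
  "t0 \<in> I \<Longrightarrow> a \<in> I \<Longrightarrow> a < t0 \<Longrightarrow> b \<in> I \<Longrightarrow> t0 < b \<Longrightarrow> \<phi>_lderiv t0 \<le> \<phi>_rderiv t0"
  unfolding \<phi>_lderiv_def \<phi>_rderiv_def by (rule convex_on_left_SUP_le_right_INF[OF convex_on_\<phi>])


lemma has_rderiv_if_pos:
  assumes t0: "t0 \<in> I" and pos: "0 < f t0"
  shows "has_rderiv f I t0 ((\<phi>_rderiv t0 + 2 * t0) / (2 * f t0))"
proof -
  have "((\<lambda>s. \<phi> s + s\<^sup>2) has_real_derivative \<phi>_rderiv t0 + 2 * t0) (at t0 within I \<inter> {t0<..})"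
    by (auto intro!: derivative_eq_intros \<phi>_has_right_derivative[OF t0])
  then have "((\<lambda>s. (f s)\<^sup>2) has_real_derivative \<phi>_rderiv t0 + 2 * t0) (at t0 within I \<inter> {t0<..})"
    by (simp add: \<phi>_def)
  then show ?thesis
    unfolding has_rderiv_def using has_real_derivative_of_square nonneg pos by blast
qed

lemma has_lderiv_if_pos:
  assumes t0: "t0 \<in> I" and pos: "0 < f t0"
  shows "has_lderiv f I t0 ((\<phi>_lderiv t0 + 2 * t0) / (2 * f t0))"
proof -
  have "((\<lambda>s. \<phi> s + s\<^sup>2) has_real_derivative \<phi>_lderiv t0 + 2 * t0) (at t0 within I \<inter> {..<t0})"
    by (auto intro!: derivative_eq_intros \<phi>_has_left_derivative[OF t0])
  then have "((\<lambda>s. (f s)\<^sup>2) has_real_derivative \<phi>_lderiv t0 + 2 * t0) (at t0 within I \<inter> {..<t0})"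
    by (simp add: \<phi>_def)
  then show ?thesis
    unfolding has_lderiv_def using has_real_derivative_of_square nonneg pos by blast
qed

lemma has_rderiv_if_zero:
  assumes t0: "t0 \<in> I" and zero: "f t0 = 0"
  shows "has_rderiv f I t0 1"
proof -
  have "((\<lambda>s. s - t0) has_real_derivative 1) (at t0 within I \<inter> {t0<..})"
    by (auto intro!: derivative_eq_intros)
  moreover have "\<forall>\<^sub>F s in at t0 within I \<inter> {t0<..}. s - t0 = f s"
    using eq_abs_if_zero[OF t0 zero] by (auto simp: eventually_at_filter)
  ultimately show ?thesis
    unfolding has_rderiv_def using has_field_derivative_cong_eventually[of "\<lambda>s. s - t0" f] zero by simp
qed

lemma has_lderiv_if_zero:
  assumes t0: "t0 \<in> I" and zero: "f t0 = 0"
  shows "has_lderiv f I t0 (- 1)"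
proof -
  have "((\<lambda>s. t0 - s) has_real_derivative - 1) (at t0 within I \<inter> {..<t0})"
    by (auto intro!: derivative_eq_intros)
  moreover have "\<forall>\<^sub>F s in at t0 within I \<inter> {..<t0}. t0 - s = f s"
    using eq_abs_if_zero[OF t0 zero] by (auto simp: eventually_at_filter)
  ultimately show ?thesis
    unfolding has_lderiv_def using has_field_derivative_cong_eventually[of "\<lambda>s. t0 - s" f] zero by simp
qed

text \<open>At \<open>sup I\<close> (resp. \<open>inf I\<close>) the one-sided filter is trivial, so these existence
  statements are vacuous there.\<close>
lemma has_rderiv_exists: "t0 \<in> I \<Longrightarrow> \<exists>v. has_rderiv f I t0 v"
  using has_rderiv_if_pos has_rderiv_if_zero nonneg by (metis order_le_less)

lemma has_lderiv_exists: "t0 \<in> I \<Longrightarrow> \<exists>v. has_lderiv f I t0 v"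
  using has_lderiv_if_pos has_lderiv_if_zero nonneg by (metis order_le_less)

lemma rderiv_abs_le_1:
  assumes t0: "t0 \<in> I" and b: "b \<in> I" "t0 < b"
  shows "\<bar>rderiv f I t0\<bar> \<le> 1"
proof -
  obtain v where v: "has_rderiv f I t0 v"
    using has_rderiv_exists[OF t0] by blast
  have "\<bar>v\<bar> \<le> 1"
    using v unfolding has_rderiv_def
    by (rule has_real_derivative_abs_le_Lipschitz[OF _ at_within_interval_right_neq_bot[OF interval t0 b]])
      (metis IntD1 dist_le mult_1 t0)
  then show ?thesis
    using rderiv_eqI[OF interval t0 b v] by simp
qed

lemma lderiv_abs_le_1:
  assumes t0: "t0 \<in> I" and a: "a \<in> I" "a < t0"
  shows "\<bar>lderiv f I t0\<bar> \<le> 1"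
proof -
  obtain v where v: "has_lderiv f I t0 v"
    using has_lderiv_exists[OF t0] by blast
  have "\<bar>v\<bar> \<le> 1"
    using v unfolding has_lderiv_def
    by (rule has_real_derivative_abs_le_Lipschitz[OF _ at_within_interval_left_neq_bot[OF interval t0 a]])
      (metis IntD1 dist_le mult_1 t0)
  then show ?thesis
    using lderiv_eqI[OF interval t0 a v] by simp
qed

lemma lderiv_le_rderiv:
  assumes t0: "t0 \<in> I" and a: "a \<in> I" "a < t0" and b: "b \<in> I" "t0 < b"
  shows "lderiv f I t0 \<le> rderiv f I t0"
proof (cases "f t0 = 0")
  case True
  then show ?thesis
    using lderiv_eqI[OF interval t0 a has_lderiv_if_zero] rderiv_eqI[OF interval t0 b has_rderiv_if_zero] t0
    by simp
next
  case False
  then have pos: "0 < f t0"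
    using nonneg[OF t0] by simp
  have "(\<phi>_lderiv t0 + 2 * t0) / (2 * f t0) \<le> (\<phi>_rderiv t0 + 2 * t0) / (2 * f t0)"
    using \<phi>_lderiv_le_rderiv[OF t0 a b] pos by (simp add: divide_right_mono)
  then show ?thesis
    using lderiv_eqI[OF interval t0 a has_lderiv_if_pos[OF t0 pos]]
      rderiv_eqI[OF interval t0 b has_rderiv_if_pos[OF t0 pos]] by simp
qed


lemma right_subgradient:
  assumes t0: "t0 \<in> I" and s: "s \<in> I" "t0 < s" and v: "v \<le> rderiv f I t0"
  shows "\<phi> t0 + (s - t0) * (2 * f t0 * v - 2 * t0) \<le> \<phi> s"
proof (cases "f t0 = 0")
  case True
  have fs: "f s = s - t0"
    using eq_abs_if_zero[OF t0 True s(1)] s(2) by simp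
  show ?thesis
    unfolding \<phi>_def True fs by (simp add: power2_eq_square algebra_simps)
next
  case False
  then have pos: "0 < f t0"
    using nonneg[OF t0] by simp
  have "2 * f t0 * v \<le> 2 * f t0 * rderiv f I t0"
    using v pos by simp
  also have "\<dots> = \<phi>_rderiv t0 + 2 * t0"
    using rderiv_eqI[OF interval t0 s has_rderiv_if_pos[OF t0 pos]] pos by simp
  finally have "2 * f t0 * v - 2 * t0 \<le> (\<phi> s - \<phi> t0) / (s - t0)"
    using \<phi>_rderiv_le_slope[OF t0 s] by linarith
  then have "(s - t0) * (2 * f t0 * v - 2 * t0) \<le> (s - t0) * ((\<phi> s - \<phi> t0) / (s - t0))"
    using s(2) by (intro mult_left_mono) auto
  then show ?thesis
    using s(2) by simp
qed

lemma left_subgradient: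
  assumes t0: "t0 \<in> I" and s: "s \<in> I" "s < t0" and v: "lderiv f I t0 \<le> v"
  shows "\<phi> t0 + (s - t0) * (2 * f t0 * v - 2 * t0) \<le> \<phi> s"
proof (cases "f t0 = 0")
  case True
  have fs: "f s = t0 - s"
    using eq_abs_if_zero[OF t0 True s(1)] s(2) by simp
  show ?thesis
    unfolding \<phi>_def True fs by (simp add: power2_eq_square algebra_simps)
next
  case False
  then have pos: "0 < f t0"
    using nonneg[OF t0] by simp
  have "\<phi>_lderiv t0 + 2 * t0 = 2 * f t0 * lderiv f I t0"
    using lderiv_eqI[OF interval t0 s has_lderiv_if_pos[OF t0 pos]] pos by simp
  also have "\<dots> \<le> 2 * f t0 * v"
    using v pos by simp
  finally have "(\<phi> s - \<phi> t0) / (s - t0) \<le> 2 * f t0 * v - 2 * t0"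
    using slope_le_\<phi>_lderiv[OF t0 s] by linarith
  then have "(s - t0) * (2 * f t0 * v - 2 * t0) \<le> (s - t0) * ((\<phi> s - \<phi> t0) / (s - t0))"
    using s(2) by (intro mult_left_mono_neg) auto
  then show ?thesis
    using s(2) by simp
qed

lemma pm_subdiff_bounds:
  assumes t0: "t0 \<in> I" and v: "v \<in> pm_subdiff f I t0"
  shows "\<bar>v\<bar> \<le> 1" "\<And>s. s \<in> I \<Longrightarrow> t0 < s \<Longrightarrow> v \<le> rderiv f I t0"
    "\<And>s. s \<in> I \<Longrightarrow> s < t0 \<Longrightarrow> lderiv f I t0 \<le> v"
proof -
  obtain a b where ab: "a \<in> I" "b \<in> I" "a < b"
    using nontrivial by blast
  consider (min) "\<forall>s\<in>I. t0 \<le> s" | (max) "\<forall>s\<in>I. s \<le> t0" "\<not> (\<forall>s\<in>I. t0 \<le> s)"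
    | (inner) a' b' where "a' \<in> I" "a' < t0" "b' \<in> I" "t0 < b'"
    using not_le by blast
  then have "\<bar>v\<bar> \<le> 1 \<and> (\<forall>s\<in>I. t0 < s \<longrightarrow> v \<le> rderiv f I t0) \<and> (\<forall>s\<in>I. s < t0 \<longrightarrow> lderiv f I t0 \<le> v)"
  proof cases
    case min
    then have "v = rderiv f I t0" "t0 < b"
      using v ab unfolding pm_subdiff_def by force+
    then show ?thesis
      using rderiv_abs_le_1[OF t0 ab(2)] min by force
  next
    case max
    then have "v = lderiv f I t0" "a < t0"
      using v ab unfolding pm_subdiff_def by (auto split: if_splits)
    then show ?thesis
      using lderiv_abs_le_1[OF t0 ab(1)] max by force
  next
    case inner
    then have nmin: "\<not> (\<forall>s\<in>I. t0 \<le> s)" and nmax: "\<not> (\<forall>s\<in>I. s \<le> t0)"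
      by force+
    have "v \<in> {min (lderiv f I t0) (rderiv f I t0) .. max (lderiv f I t0) (rderiv f I t0)}"
      using v unfolding pm_subdiff_def if_not_P[OF nmin] if_not_P[OF nmax] .
    then have "lderiv f I t0 \<le> v" "v \<le> rderiv f I t0"
      using lderiv_le_rderiv[OF t0 inner(1,2) inner(3,4)] by (simp_all add: min_def max_def)
    then show ?thesis
      using lderiv_abs_le_1[OF t0 inner(1,2)] rderiv_abs_le_1[OF t0 inner(3,4)] by auto
  qed
  then show "\<bar>v\<bar> \<le> 1" "\<And>s. s \<in> I \<Longrightarrow> t0 < s \<Longrightarrow> v \<le> rderiv f I t0"
    "\<And>s. s \<in> I \<Longrightarrow> s < t0 \<Longrightarrow> lderiv f I t0 \<le> v"
    by auto
qed

lemma point_slope_G_tangent: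
  assumes t0: "t0 \<in> I" and v: "\<bar>v\<bar> \<le> 1"
    and subgradient: "\<And>s. s \<in> I \<Longrightarrow> \<phi> t0 + (s - t0) * (2 * f t0 * v - 2 * t0) \<le> \<phi> s"
  shows "G_tangent I f t0 (\<lambda>s. sqrt ((f t0)\<^sup>2 + 2 * (s - t0) * f t0 * v + (s - t0)\<^sup>2))"
  unfolding G_tangent_def
proof (intro conjI ballI)
  show "(\<lambda>s. sqrt ((f t0)\<^sup>2 + 2 * (s - t0) * f t0 * v + (s - t0)\<^sup>2)) \<in> Gclass"
    by (rule point_slope_in_Gclass[OF nonneg[OF t0] v])
  show "sqrt ((f t0)\<^sup>2 + 2 * (t0 - t0) * f t0 * v + (t0 - t0)\<^sup>2) = f t0"
    using nonneg[OF t0] by simp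
  fix s assume s: "s \<in> I"
  have "(f t0)\<^sup>2 + 2 * (s - t0) * f t0 * v + (s - t0)\<^sup>2
        = (f s)\<^sup>2 - (\<phi> s - (\<phi> t0 + (s - t0) * (2 * f t0 * v - 2 * t0)))"
    by (simp add: \<phi>_def power2_eq_square algebra_simps)
  also have "\<dots> \<le> (f s)\<^sup>2"
    using subgradient[OF s] by simp
  finally show "sqrt ((f t0)\<^sup>2 + 2 * (s - t0) * f t0 * v + (s - t0)\<^sup>2) \<le> f s"
    by (rule real_le_lsqrt[OF nonneg[OF s]])
qed

lemma pm_subdiff_G_tangent:
  assumes t0: "t0 \<in> I" and v: "v \<in> pm_subdiff f I t0"
  shows "G_tangent I f t0 (\<lambda>s. sqrt ((f t0)\<^sup>2 + 2 * (s - t0) * f t0 * v + (s - t0)\<^sup>2))"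
proof (rule point_slope_G_tangent[OF t0 pm_subdiff_bounds(1)[OF t0 v]])
  fix s assume s: "s \<in> I"
  consider "s < t0" | "s = t0" | "t0 < s"
    by linarith
  then show "\<phi> t0 + (s - t0) * (2 * f t0 * v - 2 * t0) \<le> \<phi> s"
  proof cases
    case 1
    show ?thesis
      by (rule left_subgradient[OF t0 s 1 pm_subdiff_bounds(3)[OF t0 v s 1]])
  next
    case 3
    show ?thesis
      by (rule right_subgradient[OF t0 s 3 pm_subdiff_bounds(2)[OF t0 v s 3]])
  qed simp
qed

lemma G_convex: "G_convex I f"
  unfolding G_convex_def
proof
  fix t0 assume t0: "t0 \<in> I"
  have "pm_subdiff f I t0 \<noteq> {}"
    unfolding pm_subdiff_def by auto
  then show "\<exists>g. G_tangent I f t0 g"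
    using pm_subdiff_G_tangent[OF t0] by blast
qed

end

theorem mainTheorem16:
  fixes I :: "real set"
  assumes "is_interval I"
  shows
   "(\<forall>(f :: real \<Rightarrow> real) g t1 t2.
        G_convex I f \<and> g \<in> Gclass \<and> t1 \<in> I \<and> t2 \<in> I \<and> t1 < t2 \<and>
        g t1 = f t1 \<and> g t2 = f t2 \<longrightarrow>
          (\<forall>t\<in>{t1..t2}. f t \<le> g t) \<and> (\<forall>t\<in>I - {t1..t2}. g t \<le> f t))
    \<and>
    (\<forall>f :: real \<Rightarrow> real.
        (\<exists>a\<in>I. \<exists>b\<in>I. a < b) \<and>
        (\<forall>t1\<in>I. \<forall>t2\<in>I. t1 < t2 \<longrightarrow>
           (\<exists>g\<in>Gclass. g t1 = f t1 \<and> g t2 = f t2 \<and> (\<forall>t\<in>{t1..t2}. f t \<le> g t)))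
        \<longrightarrow>
          (\<forall>t\<in>I. \<not> (\<forall>s\<in>I. s \<le> t) \<longrightarrow> (\<exists>v. has_rderiv f I t v)) \<and>
          (\<forall>t\<in>I. \<not> (\<forall>s\<in>I. t \<le> s) \<longrightarrow> (\<exists>v. has_lderiv f I t v)) \<and>
          (\<forall>t0\<in>I. \<forall>v0\<in>pm_subdiff f I t0.
             (\<lambda>s. sqrt ((f t0)^2 + 2 * (s - t0) * f t0 * v0 + (s - t0)^2)) \<in> Gclass \<and>
             G_tangent I f t0 (\<lambda>s. sqrt ((f t0)^2 + 2 * (s - t0) * f t0 * v0 + (s - t0)^2))) \<and>
          G_convex I f)"
proof (rule conjI; intro allI impI)
  fix f :: "real \<Rightarrow> real" and g t1 t2
  assume "G_convex I f \<and> g \<in> Gclass \<and> t1 \<in> I \<and> t2 \<in> I \<and> t1 < t2 \<and> g t1 = f t1 \<and> g t2 = f t2"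
  then show "(\<forall>t\<in>{t1..t2}. f t \<le> g t) \<and> (\<forall>t\<in>I - {t1..t2}. g t \<le> f t)"
    using G_convex_two_point_contact[OF assms] by blast
next
  fix f :: "real \<Rightarrow> real"
  assume "(\<exists>a\<in>I. \<exists>b\<in>I. a < b) \<and>
    (\<forall>t1\<in>I. \<forall>t2\<in>I. t1 < t2 \<longrightarrow>
       (\<exists>g\<in>Gclass. g t1 = f t1 \<and> g t2 = f t2 \<and> (\<forall>t\<in>{t1..t2}. f t \<le> g t)))"
  then interpret below_G_chords I f
    using assms by unfold_locales auto
  show "(\<forall>t\<in>I. \<not> (\<forall>s\<in>I. s \<le> t) \<longrightarrow> (\<exists>v. has_rderiv f I t v)) \<and>
    (\<forall>t\<in>I. \<not> (\<forall>s\<in>I. t \<le> s) \<longrightarrow> (\<exists>v. has_lderiv f I t v)) \<and>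
    (\<forall>t0\<in>I. \<forall>v0\<in>pm_subdiff f I t0.
       (\<lambda>s. sqrt ((f t0)^2 + 2 * (s - t0) * f t0 * v0 + (s - t0)^2)) \<in> Gclass \<and>
       G_tangent I f t0 (\<lambda>s. sqrt ((f t0)^2 + 2 * (s - t0) * f t0 * v0 + (s - t0)^2))) \<and>
    G_convex I f"
    using has_rderiv_exists has_lderiv_exists pm_subdiff_G_tangent G_convex
    unfolding G_tangent_def by blast
qed

end
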